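(* Let $R$ be a commutative ring with unit element, $X$ a set, $F\subseteq R\langle X\rangle$ and $f\in(F)$. Let $Q=(V,E,X,s,t,l)$ be a labelled quiver such that $f$ is compatible with $Q$ and all elements of $F$ are uniformly compatible with $Q$. Then, for every $R$-linear category $\mathcal{C}$ and every representation $\mathcal{R}=(\mathcal{V},\varphi)$ of $Q$ in $\mathcal{C}$ that is consistent with the labelling $l$ and such that every realization of every element of $F$ with respect to $\mathcal{R}$ is zero, every realization of $f$ with respect to $\mathcal{R}$ is zero.
   Context: $R\langle X\rangle$ is the free algebra of noncommutative polynomials over $R$ in indeterminates $X$, with monomials the words in $\langle X\rangle$ (including the empty word $1$); $\operatorname{supp}(f)$ is the set of monomials with nonzero coefficient; $(F)$ is the two-sided ideal generated by $F$. A labelled quiver $Q=(V,E,X,s,t,l)$ has vertices $V$, edges $E$, source/target maps $s,t:E\to V$ and labelling $l:E\to X$. A nonempty path $p=e_n\cdots e_1$ (with $s(e_{i+1})=t(e_i)$) has label $l(e_n)\cdots l(e_1)$, source $s(e_1)$, target $t(e_n)$; each vertex $v$ has an empty path with label $1$ and source and target $v$. For a monomial $m$, $\sigma(m)=\{(s(p),t(p)) : p \text{ a path with } l(p)=m\}$; for a polynomial $f$, $\sigma(f)=\bigcap_{m\in\operatorname{supp}(f)}\sigma(m)$ (so $\sigma(0)=V\times V$). $f$ is compatible with $Q$ if $\sigma(f)\neq\emptyset$, and uniformly compatible if it is compatible and all $m\in\operatorname{supp}(f)$ have the same set $\sigma(m)$. $R\langle X\rangle_{v,w}=\{f : (v,w)\in\sigma(f)\}$.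 A category $\mathcal{C}$ is $R$-linear if every $\operatorname{Hom}_{\mathcal{C}}(A,B)$ is an $R$-module and composition is $R$-bilinear. A representation $(\mathcal{V},\varphi)$ of $Q$ in $\mathcal{C}$ assigns to each vertex $v$ an object $\mathcal{V}_v$ and to each edge $e$ a morphism $\varphi(e)\in\operatorname{Hom}_{\mathcal{C}}(\mathcal{V}_{s(e)},\mathcal{V}_{t(e)})$; it is consistent with $l$ if for any two nonempty paths $e_n\cdots e_1$ and $d_n\cdots d_1$ with the same source and target and equal labels, $\varphi(e_n)\cdots\varphi(e_1)=\varphi(d_n)\cdots\varphi(d_1)$. For a consistent representation and $v,w\in V$, $\varphi_{v,w}:R\langle X\rangle_{v,w}\to\operatorname{Hom}_{\mathcal{C}}(\mathcal{V}_v,\mathcal{V}_w)$ is the $R$-linear map with $\varphi_{v,w}(l(e_n\cdots e_1))=\varphi(e_n)\cdots\varphi(e_1)$ for nonempty paths $e_n\cdots e_1$ from $v$ to $w$, and $\varphi_{v,v}(1)=1_{\mathcal{V}_v}$. For $f\in R\langle X\rangle_{v,w}$, $\varphi_{v,w}(f)$ is called a realization of $f$; the realizations of $f$ are all $\varphi_{v,w}(f)$ with $(v,w)\in\sigma(f)$. *)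

theory Defs
  imports "HOL-Library.Poly_Mapping"
begin

text \<open>A noncommutative polynomial over R in indeterminates of type 'x is a finitely
supported function from words (lists over 'x; the empty list is the empty word 1)
to R. The monomial x_n ... x_1 is the list [x_n, ..., x_1]. supp f = Poly_Mapping.keys f.\<close>

type_synonym ('x, 'r) ncpoly = "'x list \<Rightarrow>\<^sub>0 'r"

definition nc_mult :: "('x, 'r::comm_ring_1) ncpoly \<Rightarrow> ('x, 'r) ncpoly \<Rightarrow> ('x, 'r) ncpoly" where
  "nc_mult f g = (\<Sum>m\<in>Poly_Mapping.keys f. \<Sum>n\<in>Poly_Mapping.keys g. Poly_Mapping.single (m @ n) (Poly_Mapping.lookup f m * Poly_Mapping.lookup g n))"

inductive_set nc_ideal :: "('x, 'r::comm_ring_1) ncpoly set \<Rightarrow> ('x, 'r) ncpoly set"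
  for F :: "('x, 'r) ncpoly set" where
  gen: "f \<in> F \<Longrightarrow> f \<in> nc_ideal F"
| zero: "0 \<in> nc_ideal F"
| add: "f \<in> nc_ideal F \<Longrightarrow> g \<in> nc_ideal F \<Longrightarrow> f + g \<in> nc_ideal F"
| lmult: "f \<in> nc_ideal F \<Longrightarrow> nc_mult a f \<in> nc_ideal F"
| rmult: "f \<in> nc_ideal F \<Longrightarrow> nc_mult f a \<in> nc_ideal F"

text \<open>A nonempty path e_n ... e_1 is the list [e_n, ..., e_1]; its label is map l,
its source s (last es), its target t (hd es).\<close>

definition quiver :: "'v set \<Rightarrow> 'e set \<Rightarrow> ('e \<Rightarrow> 'v) \<Rightarrow> ('e \<Rightarrow> 'v) \<Rightarrow> bool" where
  "quiver V E s t \<longleftrightarrow> s ` E \<subseteq> V \<and> t ` E \<subseteq> V"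

definition is_path :: "'e set \<Rightarrow> ('e \<Rightarrow> 'v) \<Rightarrow> ('e \<Rightarrow> 'v) \<Rightarrow> 'e list \<Rightarrow> bool" where
  "is_path E s t es \<longleftrightarrow> es \<noteq> [] \<and> set es \<subseteq> E \<and>
     (\<forall>i. Suc i < length es \<longrightarrow> s (es ! i) = t (es ! Suc i))"

definition sigma_mono :: "'v set \<Rightarrow> 'e set \<Rightarrow> ('e \<Rightarrow> 'v) \<Rightarrow> ('e \<Rightarrow> 'v) \<Rightarrow> ('e \<Rightarrow> 'x)
    \<Rightarrow> 'x list \<Rightarrow> ('v \<times> 'v) set" where
  "sigma_mono V E s t l m =
     {(v, w). (m = [] \<and> v = w \<and> v \<in> V) \<or>
              (\<exists>es. is_path E s t es \<and> map l es = m \<and> s (last es) = v \<and> t (hd es) = w)}"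

text \<open>sigma(f) = intersection over supp f (so sigma(0) = V x V).\<close>

definition sigma :: "'v set \<Rightarrow> 'e set \<Rightarrow> ('e \<Rightarrow> 'v) \<Rightarrow> ('e \<Rightarrow> 'v) \<Rightarrow> ('e \<Rightarrow> 'x)
    \<Rightarrow> ('x, 'r::comm_ring_1) ncpoly \<Rightarrow> ('v \<times> 'v) set" where
  "sigma V E s t l f = {p \<in> V \<times> V. \<forall>m\<in>Poly_Mapping.keys f. p \<in> sigma_mono V E s t l m}"

definition compatible where
  "compatible V E s t l f \<longleftrightarrow> sigma V E s t l f \<noteq> {}"

definition uniformly_compatible where
  "uniformly_compatible V E s t l f \<longleftrightarrow> compatible V E s t l f \<and>
     (\<forall>m\<in>Poly_Mapping.keys f. \<forall>m'\<in>Poly_Mapping.keys f. sigma_mono V E s t l m = sigma_mono V E s t l m')"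

text \<open>A category with objects of type 'o and morphisms of type 'm. lc_hom C A B is
Hom(A,B); lc_cmp C A B D g f is the composite g o f of f : A -> B and g : B -> D;
lc_idm C A is the identity of A; lc_add, lc_zero, lc_smult give the R-module
structure on Hom(A,B).\<close>

record ('o, 'm, 'r) lcat =
  lc_hom :: "'o \<Rightarrow> 'o \<Rightarrow> 'm set"
  lc_cmp :: "'o \<Rightarrow> 'o \<Rightarrow> 'o \<Rightarrow> 'm \<Rightarrow> 'm \<Rightarrow> 'm"
  lc_idm :: "'o \<Rightarrow> 'm"
  lc_add :: "'o \<Rightarrow> 'o \<Rightarrow> 'm \<Rightarrow> 'm \<Rightarrow> 'm"
  lc_zero :: "'o \<Rightarrow> 'o \<Rightarrow> 'm"
  lc_smult :: "'o \<Rightarrow> 'o \<Rightarrow> 'r \<Rightarrow> 'm \<Rightarrow> 'm"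

definition is_category :: "('o, 'm, 'r, 'z) lcat_scheme \<Rightarrow> bool" where
  "is_category C \<longleftrightarrow>
     (\<forall>A. lc_idm C A \<in> lc_hom C A A) \<and>
     (\<forall>A B D f g. f \<in> lc_hom C A B \<longrightarrow> g \<in> lc_hom C B D \<longrightarrow> lc_cmp C A B D g f \<in> lc_hom C A D) \<and>
     (\<forall>A B D G f g h. f \<in> lc_hom C A B \<longrightarrow> g \<in> lc_hom C B D \<longrightarrow> h \<in> lc_hom C D G \<longrightarrow>
        lc_cmp C A D G h (lc_cmp C A B D g f) = lc_cmp C A B G (lc_cmp C B D G h g) f) \<and>
     (\<forall>A B f. f \<in> lc_hom C A B \<longrightarrow> lc_cmp C A A B f (lc_idm C A) = f \<and> lc_cmp C A B B (lc_idm C B) f = f)"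

definition hom_modules :: "('o, 'm, 'r::comm_ring_1, 'z) lcat_scheme \<Rightarrow> bool" where
  "hom_modules C \<longleftrightarrow> (\<forall>A B. let H = lc_hom C A B; add = lc_add C A B; z = lc_zero C A B;
        sm = lc_smult C A B in
     z \<in> H \<and>
     (\<forall>f\<in>H. \<forall>g\<in>H. add f g \<in> H) \<and>
     (\<forall>r. \<forall>f\<in>H. sm r f \<in> H) \<and>
     (\<forall>f\<in>H. \<forall>g\<in>H. \<forall>h\<in>H. add (add f g) h = add f (add g h)) \<and>
     (\<forall>f\<in>H. \<forall>g\<in>H. add f g = add g f) \<and>
     (\<forall>f\<in>H. add z f = f) \<and>
     (\<forall>f\<in>H. \<exists>g\<in>H. add f g = z) \<and>
     (\<forall>r. \<forall>f\<in>H. \<forall>g\<in>H. sm r (add f g) = add (sm r f) (sm r g)) \<and>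
     (\<forall>r r'. \<forall>f\<in>H. sm (r + r') f = add (sm r f) (sm r' f)) \<and>
     (\<forall>r r'. \<forall>f\<in>H. sm (r * r') f = sm r (sm r' f)) \<and>
     (\<forall>f\<in>H. sm 1 f = f))"

definition bilinear_comp :: "('o, 'm, 'r::comm_ring_1, 'z) lcat_scheme \<Rightarrow> bool" where
  "bilinear_comp C \<longleftrightarrow>
     (\<forall>A B D f f' g g' r. f \<in> lc_hom C A B \<longrightarrow> f' \<in> lc_hom C A B \<longrightarrow>
        g \<in> lc_hom C B D \<longrightarrow> g' \<in> lc_hom C B D \<longrightarrow>
        lc_cmp C A B D (lc_add C B D g g') f = lc_add C A D (lc_cmp C A B D g f) (lc_cmp C A B D g' f) \<and>
        lc_cmp C A B D g (lc_add C A B f f') = lc_add C A D (lc_cmp C A B D g f) (lc_cmp C A B D g f') \<and>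
        lc_cmp C A B D (lc_smult C B D r g) f = lc_smult C A D r (lc_cmp C A B D g f) \<and>
        lc_cmp C A B D g (lc_smult C A B r f) = lc_smult C A D r (lc_cmp C A B D g f))"

definition R_linear_category :: "('o, 'm, 'r::comm_ring_1, 'z) lcat_scheme \<Rightarrow> bool" where
  "R_linear_category C \<longleftrightarrow> is_category C \<and> hom_modules C \<and> bilinear_comp C"

definition representation ::
  "('o, 'm, 'r, 'z) lcat_scheme \<Rightarrow> 'v set \<Rightarrow> 'e set \<Rightarrow> ('e \<Rightarrow> 'v) \<Rightarrow> ('e \<Rightarrow> 'v)
     \<Rightarrow> ('v \<Rightarrow> 'o) \<Rightarrow> ('e \<Rightarrow> 'm) \<Rightarrow> bool" where
  "representation C V E s t Vo phi \<longleftrightarrow> (\<forall>e\<in>E. phi e \<in> lc_hom C (Vo (s e)) (Vo (t e)))"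

fun path_mor :: "('o, 'm, 'r, 'z) lcat_scheme \<Rightarrow> ('e \<Rightarrow> 'v) \<Rightarrow> ('e \<Rightarrow> 'v)
     \<Rightarrow> ('v \<Rightarrow> 'o) \<Rightarrow> ('e \<Rightarrow> 'm) \<Rightarrow> 'e list \<Rightarrow> 'm" where
  "path_mor C s t Vo phi [] = undefined"
| "path_mor C s t Vo phi [e] = phi e"
| "path_mor C s t Vo phi (e # e' # es) =
     lc_cmp C (Vo (s (last (e' # es)))) (Vo (s e)) (Vo (t e)) (phi e) (path_mor C s t Vo phi (e' # es))"

definition consistent ::
  "('o, 'm, 'r, 'z) lcat_scheme \<Rightarrow> 'e set \<Rightarrow> ('e \<Rightarrow> 'v) \<Rightarrow> ('e \<Rightarrow> 'v) \<Rightarrow> ('e \<Rightarrow> 'x)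
     \<Rightarrow> ('v \<Rightarrow> 'o) \<Rightarrow> ('e \<Rightarrow> 'm) \<Rightarrow> bool" where
  "consistent C E s t l Vo phi \<longleftrightarrow>
     (\<forall>es ds. is_path E s t es \<longrightarrow> is_path E s t ds \<longrightarrow>
        s (last es) = s (last ds) \<longrightarrow> t (hd es) = t (hd ds) \<longrightarrow> map l es = map l ds \<longrightarrow>
        path_mor C s t Vo phi es = path_mor C s t Vo phi ds)"

definition mono_real ::
  "('o, 'm, 'r, 'z) lcat_scheme \<Rightarrow> 'e set \<Rightarrow> ('e \<Rightarrow> 'v) \<Rightarrow> ('e \<Rightarrow> 'v) \<Rightarrow> ('e \<Rightarrow> 'x)
     \<Rightarrow> ('v \<Rightarrow> 'o) \<Rightarrow> ('e \<Rightarrow> 'm) \<Rightarrow> 'v \<Rightarrow> 'v \<Rightarrow> 'x list \<Rightarrow> 'm" where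
  "mono_real C E s t l Vo phi v w m =
     (if m = [] then lc_idm C (Vo v)
      else path_mor C s t Vo phi
             (SOME es. is_path E s t es \<and> map l es = m \<and> s (last es) = v \<and> t (hd es) = w))"

text \<open>Finite sums in Hom(A,B) (independent of the enumeration in an R-module).\<close>

definition hom_sum :: "('o, 'm, 'r, 'z) lcat_scheme \<Rightarrow> 'o \<Rightarrow> 'o \<Rightarrow> ('a \<Rightarrow> 'm) \<Rightarrow> 'a set \<Rightarrow> 'm" where
  "hom_sum C A B g S =
     foldr (\<lambda>x acc. lc_add C A B (g x) acc) (SOME xs. distinct xs \<and> set xs = S) (lc_zero C A B)"

definition realization ::
  "('o, 'm, 'r::comm_ring_1, 'z) lcat_scheme \<Rightarrow> 'e set \<Rightarrow> ('e \<Rightarrow> 'v) \<Rightarrow> ('e \<Rightarrow> 'v) \<Rightarrow> ('e \<Rightarrow> 'x)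
     \<Rightarrow> ('v \<Rightarrow> 'o) \<Rightarrow> ('e \<Rightarrow> 'm) \<Rightarrow> 'v \<Rightarrow> 'v \<Rightarrow> ('x, 'r) ncpoly \<Rightarrow> 'm" where
  "realization C E s t l Vo phi v w f =
     hom_sum C (Vo v) (Vo w)
       (\<lambda>m. lc_smult C (Vo v) (Vo w) (Poly_Mapping.lookup f m) (mono_real C E s t l Vo phi v w m)) (Poly_Mapping.keys f)"

definition realizations_vanish where
  "realizations_vanish C V E s t l Vo phi f \<longleftrightarrow>
     (\<forall>(v, w) \<in> sigma V E s t l f. realization C E s t l Vo phi v w f = lc_zero C (Vo v) (Vo w))"

end

theory Submission
  imports Defs "HOL-Algebra.FiniteProduct"
begin

text \<open>Extend each \<phi>_{v,w} by zero to all monomials and then R-linearly to all of R<X>. This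
gives an additive map T_{v,w} : R<X> \<rightarrow> Hom(V_v, V_w) that is defined on every polynomial,
so the ideal (F) becomes accessible to induction. For g \<in> F and words a, b, uniform compatibility
of g leaves two possibilities: no monomial a m b with m \<in> supp g is the label of a path from v to
w, or all of them are, through the same intermediate vertices u1, u2. In the second
case T_{v,w}(a g b) = \<phi>(a) \<circ> \<phi>_{u1,u2}(g) \<circ> \<phi>(b) = 0. The property
"T_{v,w}(a h b) = 0 for all words a, b" is preserved by sums and by multiplication with
polynomials on either side, hence holds for every h \<in> (F); for (v, w) \<in> \<sigma>(f) and a = b = 1,
T_{v,w}(f) is the realization \<phi>_{v,w}(f).\<close>

section \<open>Hom-groups of an R-linear category\<close>

lemma finprod_hom:
  assumes "comm_group G" "comm_group H" "h \<in> hom G H" "f \<in> A \<rightarrow> carrier G"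
  shows "h (finprod G f A) = finprod H (\<lambda>x. h (f x)) A"
proof -
  interpret G: comm_group G by fact
  interpret H: comm_group H by fact
  interpret group_hom G H h
    by (simp add: group_hom_def group_hom_axioms_def assms G.group_axioms H.group_axioms)
  show ?thesis using assms(4)
  proof (induction A rule: infinite_finite_induct)
    case (insert a A)
    then show ?case by (auto simp: Pi_def G.finprod_closed)
  qed simp_all
qed

text \<open>Hom(A, B) is written multiplicatively, as HOL-Algebra's groups are, so that finite sums
in Hom(A, B) are \<open>finprod\<close>.\<close>

definition hom_group :: "('o, 'm, 'r, 'z) lcat_scheme \<Rightarrow> 'o \<Rightarrow> 'o \<Rightarrow> 'm monoid" where
  "hom_group C A B = \<lparr>carrier = lc_hom C A B, monoid.mult = lc_add C A B, one = lc_zero C A B\<rparr>"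

lemma hom_group_simps [simp]:
  "carrier (hom_group C A B) = lc_hom C A B"
  "monoid.mult (hom_group C A B) = lc_add C A B"
  "one (hom_group C A B) = lc_zero C A B"
  by (simp_all add: hom_group_def)

locale linear_category =
  fixes C :: "('o, 'm, 'r::comm_ring_1, 'z) lcat_scheme"
  assumes R_linear: "R_linear_category C"
begin

lemma hom_modules: "hom_modules C"
  and is_category: "is_category C"
  and bilinear_comp: "bilinear_comp C"
  using R_linear by (simp_all add: R_linear_category_def)

lemmas hom_module_laws = hom_modules[unfolded hom_modules_def Let_def, rule_format]

lemma lc_zero_closed: "lc_zero C A B \<in> lc_hom C A B"
  using hom_module_laws[of A B] by (elim conjE)

lemma lc_add_closed: "f \<in> lc_hom C A B \<Longrightarrow> g \<in> lc_hom C A B \<Longrightarrow> lc_add C A B f g \<in> lc_hom C A B"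
  using hom_module_laws[of A B] by (elim conjE) blast

lemma lc_smult_closed: "f \<in> lc_hom C A B \<Longrightarrow> lc_smult C A B r f \<in> lc_hom C A B"
  using hom_module_laws[of A B] by (elim conjE) blast

lemma lc_add_assoc:
  "f \<in> lc_hom C A B \<Longrightarrow> g \<in> lc_hom C A B \<Longrightarrow> h \<in> lc_hom C A B \<Longrightarrow>
   lc_add C A B (lc_add C A B f g) h = lc_add C A B f (lc_add C A B g h)"
  using hom_module_laws[of A B] by (elim conjE) blast

lemma lc_add_commute: "f \<in> lc_hom C A B \<Longrightarrow> g \<in> lc_hom C A B \<Longrightarrow> lc_add C A B f g = lc_add C A B g f"
  using hom_module_laws[of A B] by (elim conjE) blast

lemma lc_add_zero_left: "f \<in> lc_hom C A B \<Longrightarrow> lc_add C A B (lc_zero C A B) f = f"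
  using hom_module_laws[of A B] by (elim conjE) blast

lemma lc_add_inverse: "f \<in> lc_hom C A B \<Longrightarrow> \<exists>g\<in>lc_hom C A B. lc_add C A B g f = lc_zero C A B"
  using hom_module_laws[of A B] by (elim conjE) metis

lemma lc_smult_add:
  "f \<in> lc_hom C A B \<Longrightarrow> g \<in> lc_hom C A B \<Longrightarrow>
   lc_smult C A B r (lc_add C A B f g) = lc_add C A B (lc_smult C A B r f) (lc_smult C A B r g)"
  using hom_module_laws[of A B] by (elim conjE) blast

lemma lc_add_smult:
  "f \<in> lc_hom C A B \<Longrightarrow> lc_smult C A B (r + r') f = lc_add C A B (lc_smult C A B r f) (lc_smult C A B r' f)"
  using hom_module_laws[of A B] by (elim conjE) blast

lemma lc_smult_smult:
  "f \<in> lc_hom C A B \<Longrightarrow> lc_smult C A B (r * r') f = lc_smult C A B r (lc_smult C A B r' f)"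
  using hom_module_laws[of A B] by (elim conjE) blast

lemma comm_group_hom_group: "comm_group (hom_group C A B)"
  by (rule comm_groupI)
     (auto simp: lc_zero_closed lc_add_closed lc_add_assoc lc_add_zero_left lc_add_inverse
       intro: lc_add_commute)

lemma lc_smult_hom: "lc_smult C A B r \<in> hom (hom_group C A B) (hom_group C A B)"
  by (intro homI) (simp_all add: lc_smult_closed lc_smult_add)

lemma lc_cmp_closed: "f \<in> lc_hom C A B \<Longrightarrow> g \<in> lc_hom C B D \<Longrightarrow> lc_cmp C A B D g f \<in> lc_hom C A D"
  using is_category unfolding is_category_def by blast

lemma lc_idm_closed: "lc_idm C A \<in> lc_hom C A A"
  using is_category unfolding is_category_def by blast

lemma lc_cmp_assoc:
  "f \<in> lc_hom C A B \<Longrightarrow> g \<in> lc_hom C B D \<Longrightarrow> h \<in> lc_hom C D G \<Longrightarrow>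
   lc_cmp C A D G h (lc_cmp C A B D g f) = lc_cmp C A B G (lc_cmp C B D G h g) f"
  using is_category unfolding is_category_def by blast

lemma lc_cmp_idm_right: "f \<in> lc_hom C A B \<Longrightarrow> lc_cmp C A A B f (lc_idm C A) = f"
  using is_category unfolding is_category_def by blast

lemma lc_cmp_idm_left: "f \<in> lc_hom C A B \<Longrightarrow> lc_cmp C A B B (lc_idm C B) f = f"
  using is_category unfolding is_category_def by blast

lemma lc_cmp_left_hom:
  assumes "g \<in> lc_hom C B D"
  shows "lc_cmp C A B D g \<in> hom (hom_group C A B) (hom_group C A D)"
  using bilinear_comp assms unfolding bilinear_comp_def
  by (intro homI) (auto intro: lc_cmp_closed)

lemma lc_cmp_right_hom:
  assumes "f \<in> lc_hom C A B"
  shows "(\<lambda>g. lc_cmp C A B D g f) \<in> hom (hom_group C B D) (hom_group C A D)"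
  using bilinear_comp assms unfolding bilinear_comp_def
  by (intro homI) (auto intro: lc_cmp_closed)

lemma lc_cmp_smult_left:
  "f \<in> lc_hom C A B \<Longrightarrow> g \<in> lc_hom C B D \<Longrightarrow>
   lc_cmp C A B D (lc_smult C B D r g) f = lc_smult C A D r (lc_cmp C A B D g f)"
  using bilinear_comp unfolding bilinear_comp_def by blast

lemma lc_cmp_smult_right:
  "f \<in> lc_hom C A B \<Longrightarrow> g \<in> lc_hom C B D \<Longrightarrow>
   lc_cmp C A B D g (lc_smult C A B r f) = lc_smult C A D r (lc_cmp C A B D g f)"
  using bilinear_comp unfolding bilinear_comp_def by blast

lemma group_hom_hom_group:
  "L \<in> hom (hom_group C A B) (hom_group C A' B') \<Longrightarrow> group_hom (hom_group C A B) (hom_group C A' B') L"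
  using comm_group_hom_group by (simp add: group_hom_def group_hom_axioms_def comm_group.axioms(2))

lemma lc_smult_zero: "lc_smult C A B r (lc_zero C A B) = lc_zero C A B"
  using group_hom.hom_one[OF group_hom_hom_group[OF lc_smult_hom]] by simp

lemma lc_cmp_zero_left: "f \<in> lc_hom C A B \<Longrightarrow> lc_cmp C A B D (lc_zero C B D) f = lc_zero C A D"
  using group_hom.hom_one[OF group_hom_hom_group[OF lc_cmp_right_hom]] by simp

lemma lc_cmp_zero_right: "g \<in> lc_hom C B D \<Longrightarrow> lc_cmp C A B D g (lc_zero C A B) = lc_zero C A D"
  using group_hom.hom_one[OF group_hom_hom_group[OF lc_cmp_left_hom]] by simp

lemma lc_smult_zero_left:
  assumes "f \<in> lc_hom C A B"
  shows "lc_smult C A B 0 f = lc_zero C A B"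
proof -
  interpret comm_group "hom_group C A B" by (rule comm_group_hom_group)
  have "lc_add C A B (lc_smult C A B 0 f) (lc_smult C A B 0 f) = lc_smult C A B 0 f"
    using lc_add_smult[OF assms, of 0 0] by simp
  then show ?thesis using l_cancel_one[of "lc_smult C A B 0 f"] lc_smult_closed[OF assms] by simp
qed

lemma hom_sum_eq_finprod:
  assumes "finite S" "g \<in> S \<rightarrow> lc_hom C A B"
  shows "hom_sum C A B g S = finprod (hom_group C A B) g S"
proof -
  interpret comm_group "hom_group C A B" by (rule comm_group_hom_group)
  define xs where "xs = (SOME xs. distinct xs \<and> set xs = S)"
  have "\<exists>xs. distinct xs \<and> set xs = S"
    using finite_distinct_list[OF assms(1)] by blast
  then have "distinct xs \<and> set xs = S"
    unfolding xs_def by (rule someI_ex)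
  then have xs: "distinct xs" "set xs = S" by auto
  have "foldr (\<lambda>x acc. lc_add C A B (g x) acc) ys (lc_zero C A B) = finprod (hom_group C A B) g (set ys)"
    if "distinct ys" "set ys \<subseteq> S" for ys
    using that
  proof (induction ys)
    case (Cons a ys)
    then show ?case using assms(2) by (simp, subst finprod_insert) (auto simp: Pi_def)
  qed simp
  then show ?thesis using xs unfolding hom_sum_def xs_def by simp
qed

section \<open>Linear extension of maps on monomials\<close>

definition linear_ext :: "'o \<Rightarrow> 'o \<Rightarrow> ('x list \<Rightarrow> 'm) \<Rightarrow> ('x, 'r) ncpoly \<Rightarrow> 'm" where
  "linear_ext A B P h =
     finprod (hom_group C A B) (\<lambda>m. lc_smult C A B (Poly_Mapping.lookup h m) (P m)) (Poly_Mapping.keys h)"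

context
  fixes A B :: 'o and P :: "'x list \<Rightarrow> 'm"
  assumes P_hom: "\<And>m. P m \<in> lc_hom C A B"
begin

interpretation G: comm_group "hom_group C A B" by (rule comm_group_hom_group)

lemma linear_ext_closed: "linear_ext A B P h \<in> lc_hom C A B"
  unfolding linear_ext_def
  by (rule G.finprod_closed[simplified]) (simp add: Pi_def lc_smult_closed P_hom)

lemma linear_ext_superset:
  assumes "finite S" "Poly_Mapping.keys h \<subseteq> S"
  shows "linear_ext A B P h = finprod (hom_group C A B) (\<lambda>m. lc_smult C A B (Poly_Mapping.lookup h m) (P m)) S"
  unfolding linear_ext_def
  by (rule G.finprod_mono_neutral_cong_left)
     (use assms in \<open>auto simp: in_keys_iff lc_smult_zero_left lc_smult_closed P_hom\<close>)

lemma linear_ext_cong: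
  assumes "\<And>m. m \<in> Poly_Mapping.keys h \<Longrightarrow> P' m = P m"
  shows "linear_ext A B P' h = linear_ext A B P h"
  unfolding linear_ext_def
  by (rule G.finprod_cong') (auto simp: assms lc_smult_closed P_hom)

lemma linear_ext_eq_zero:
  assumes "\<And>m. m \<in> Poly_Mapping.keys h \<Longrightarrow> P m = lc_zero C A B"
  shows "linear_ext A B P h = lc_zero C A B"
  unfolding linear_ext_def
  by (rule G.finprod_one_eqI[simplified]) (simp add: assms lc_smult_zero)

lemma linear_ext_0: "linear_ext A B P 0 = lc_zero C A B"
  by (simp add: linear_ext_def)

lemma linear_ext_add:
  "linear_ext A B P (h1 + h2) = lc_add C A B (linear_ext A B P h1) (linear_ext A B P h2)"
proof -
  let ?S = "Poly_Mapping.keys h1 \<union> Poly_Mapping.keys h2"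
  let ?t = "\<lambda>h m. lc_smult C A B (Poly_Mapping.lookup h m) (P m)"
  have "linear_ext A B P (h1 + h2) = finprod (hom_group C A B) (?t (h1 + h2)) ?S"
    by (rule linear_ext_superset) (simp_all add: keys_add)
  also have "\<dots> = finprod (hom_group C A B) (\<lambda>m. lc_add C A B (?t h1 m) (?t h2 m)) ?S"
    by (simp add: lookup_add lc_add_smult P_hom)
  also have "\<dots> = lc_add C A B (finprod (hom_group C A B) (?t h1) ?S) (finprod (hom_group C A B) (?t h2) ?S)"
    using G.finprod_multf[of "?t h1" ?S "?t h2"] by (simp add: Pi_def lc_smult_closed P_hom)
  also have "\<dots> = lc_add C A B (linear_ext A B P h1) (linear_ext A B P h2)"
    using linear_ext_superset[of ?S h1] linear_ext_superset[of ?S h2] by simp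
  finally show ?thesis .
qed

lemma linear_ext_single:
  "linear_ext A B P (Poly_Mapping.single k r) = lc_smult C A B r (P k)"
  using G.r_one[of "lc_smult C A B r (P k)"]
  by (cases "r = 0")
     (simp_all add: linear_ext_def lc_smult_zero_left lc_smult_closed P_hom G.finprod_singleton_swap lookup_single)

lemma linear_ext_sum:
  "linear_ext A B P (sum H I) = finprod (hom_group C A B) (\<lambda>i. linear_ext A B P (H i)) I"
proof (induction I rule: infinite_finite_induct)
  case (insert i I)
  then show ?case by (simp add: linear_ext_add linear_ext_closed Pi_def)
qed (simp_all add: linear_ext_0)

lemma linear_ext_double_sum:
  assumes "finite I" "finite J"
  shows "linear_ext A B P (\<Sum>p\<in>I. \<Sum>n\<in>J. Poly_Mapping.single (k p n) (x p * y n)) =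
    finprod (hom_group C A B) (\<lambda>p. lc_smult C A B (x p)
       (finprod (hom_group C A B) (\<lambda>n. lc_smult C A B (y n) (P (k p n))) J)) I"
  unfolding linear_ext_sum linear_ext_single
proof (rule G.finprod_cong')
  fix p
  have "finprod (hom_group C A B) (\<lambda>n. lc_smult C A B (x p * y n) (P (k p n))) J =
    finprod (hom_group C A B) (\<lambda>n. lc_smult C A B (x p) (lc_smult C A B (y n) (P (k p n)))) J"
    by (simp add: lc_smult_smult P_hom)
  also have "\<dots> = lc_smult C A B (x p) (finprod (hom_group C A B) (\<lambda>n. lc_smult C A B (y n) (P (k p n))) J)"
    by (rule finprod_hom[OF comm_group_hom_group comm_group_hom_group lc_smult_hom, symmetric])
       (simp add: Pi_def lc_smult_closed P_hom)
  finally show "finprod (hom_group C A B) (\<lambda>n. lc_smult C A B (x p * y n) (P (k p n))) J =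
    lc_smult C A B (x p) (finprod (hom_group C A B) (\<lambda>n. lc_smult C A B (y n) (P (k p n))) J)" .
qed (auto simp: Pi_def lc_smult_closed P_hom intro!: lc_smult_closed G.finprod_closed[simplified])

lemma linear_ext_nc_mult_left_eq_zero:
  assumes "\<And>p. linear_ext A B (\<lambda>n. P (p @ n)) f = lc_zero C A B"
  shows "linear_ext A B P (nc_mult c f) = lc_zero C A B"
proof -
  have "linear_ext A B P (nc_mult c f) = finprod (hom_group C A B)
      (\<lambda>p. lc_smult C A B (Poly_Mapping.lookup c p) (linear_ext A B (\<lambda>n. P (p @ n)) f)) (Poly_Mapping.keys c)"
    unfolding nc_mult_def by (subst linear_ext_double_sum) (simp_all add: linear_ext_def)
  then show ?thesis using G.finprod_one[simplified] by (simp add: assms lc_smult_zero)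
qed

lemma linear_ext_nc_mult_right_eq_zero:
  assumes "\<And>p. linear_ext A B (\<lambda>n. P (n @ p)) f = lc_zero C A B"
  shows "linear_ext A B P (nc_mult f c) = lc_zero C A B"
proof -
  have swap: "nc_mult f c = (\<Sum>p\<in>Poly_Mapping.keys c. \<Sum>n\<in>Poly_Mapping.keys f.
      Poly_Mapping.single (n @ p) (Poly_Mapping.lookup c p * Poly_Mapping.lookup f n))"
    unfolding nc_mult_def by (subst sum.swap) (simp add: mult.commute)
  have "linear_ext A B P (nc_mult f c) = finprod (hom_group C A B)
      (\<lambda>p. lc_smult C A B (Poly_Mapping.lookup c p) (linear_ext A B (\<lambda>n. P (n @ p)) f)) (Poly_Mapping.keys c)"
    unfolding swap by (subst linear_ext_double_sum) (simp_all add: linear_ext_def)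
  then show ?thesis using G.finprod_one[simplified] by (simp add: assms lc_smult_zero)
qed

lemma linear_ext_hom:
  assumes "L \<in> hom (hom_group C A B) (hom_group C A' B')"
    and "\<And>r x. x \<in> lc_hom C A B \<Longrightarrow> L (lc_smult C A B r x) = lc_smult C A' B' r (L x)"
  shows "linear_ext A' B' (\<lambda>m. L (P m)) h = L (linear_ext A B P h)"
  unfolding linear_ext_def
  by (subst finprod_hom[OF comm_group_hom_group comm_group_hom_group assms(1)])
     (simp_all add: Pi_def assms(2) lc_smult_closed P_hom)

lemma linear_ext_cmp_left:
  assumes "g \<in> lc_hom C B D"
  shows "linear_ext A D (\<lambda>m. lc_cmp C A B D g (P m)) h = lc_cmp C A B D g (linear_ext A B P h)"
  by (rule linear_ext_hom[OF lc_cmp_left_hom[OF assms]]) (simp add: lc_cmp_smult_right assms)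

lemma linear_ext_cmp_right:
  assumes "f \<in> lc_hom C A' A"
  shows "linear_ext A' B (\<lambda>m. lc_cmp C A' A B (P m) f) h = lc_cmp C A' A B (linear_ext A B P h) f"
  by (rule linear_ext_hom[OF lc_cmp_right_hom[OF assms]]) (simp add: lc_cmp_smult_left assms)

end

lemma linear_ext_ideal_eq_zero:
  assumes "h \<in> nc_ideal F"
    and P_hom: "\<And>m. P m \<in> lc_hom C A B"
    and vanish_gen: "\<And>g a b. g \<in> F \<Longrightarrow> linear_ext A B (\<lambda>m. P (a @ m @ b)) g = lc_zero C A B"
  shows "linear_ext A B (\<lambda>m. P (a @ m @ b)) h = lc_zero C A B"
  using assms(1)
proof (induction arbitrary: a b)
  case (gen g)
  then show ?case by (rule vanish_gen)
next
  case zero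
  then show ?case by (simp add: linear_ext_0 P_hom)
next
  case (add f g)
  then show ?case by (simp add: linear_ext_add P_hom lc_add_zero_left lc_zero_closed)
next
  case (lmult f c)
  have "linear_ext A B (\<lambda>n. P (a @ (p @ n) @ b)) f = lc_zero C A B" for p
    using lmult.IH[of "a @ p" b] by simp
  then show ?case by (intro linear_ext_nc_mult_left_eq_zero) (simp_all add: P_hom)
next
  case (rmult f c)
  have "linear_ext A B (\<lambda>n. P (a @ (n @ p) @ b)) f = lc_zero C A B" for p
    using rmult.IH[of a "p @ b"] by simp
  then show ?case by (intro linear_ext_nc_mult_right_eq_zero) (simp_all add: P_hom)
qed

end

section \<open>Paths and the sets \<sigma>(m)\<close>

lemma is_path_single [simp]: "is_path E s t [e] \<longleftrightarrow> e \<in> E"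
  by (auto simp: is_path_def)

lemma is_path_Cons_Cons:
  "is_path E s t (e # e' # es) \<longleftrightarrow> e \<in> E \<and> s e = t e' \<and> is_path E s t (e' # es)"
proof
  assume "is_path E s t (e # e' # es)"
  then show "e \<in> E \<and> s e = t e' \<and> is_path E s t (e' # es)"
    unfolding is_path_def by (auto dest: spec[of _ 0] spec[of _ "Suc i" for i])
next
  assume path: "e \<in> E \<and> s e = t e' \<and> is_path E s t (e' # es)"
  show "is_path E s t (e # e' # es)"
    unfolding is_path_def
  proof (intro conjI allI impI)
    fix i assume "Suc i < length (e # e' # es)"
    then show "s ((e # e' # es) ! i) = t ((e # e' # es) ! Suc i)"
      using path unfolding is_path_def by (cases i) auto
  qed (use path in \<open>auto simp: is_path_def\<close>)
qed

lemma is_path_append_iff: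
  assumes "es \<noteq> []" "ds \<noteq> []"
  shows "is_path E s t (es @ ds) \<longleftrightarrow> is_path E s t es \<and> is_path E s t ds \<and> s (last es) = t (hd ds)"
  using assms
proof (induction es rule: induct_list012)
  case (2 e)
  then show ?case by (cases ds) (auto simp: is_path_Cons_Cons)
next
  case (3 e e' es)
  then show ?case by (auto simp: is_path_Cons_Cons)
qed simp

lemma sigma_mono_Nil: "(v, w) \<in> sigma_mono V E s t l [] \<longleftrightarrow> v = w \<and> v \<in> V"
  by (simp add: sigma_mono_def is_path_def)

lemma sigma_mono_nonempty:
  "m \<noteq> [] \<Longrightarrow> (v, w) \<in> sigma_mono V E s t l m \<longleftrightarrow>
     (\<exists>es. is_path E s t es \<and> map l es = m \<and> s (last es) = v \<and> t (hd es) = w)"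
  by (simp add: sigma_mono_def)

lemma sigma_mono_subset:
  assumes "quiver V E s t"
  shows "sigma_mono V E s t l m \<subseteq> V \<times> V"
proof -
  have "v \<in> V \<and> w \<in> V" if vw: "(v, w) \<in> sigma_mono V E s t l m" for v w
  proof (cases "m = []")
    case False
    then obtain es where es: "is_path E s t es" "s (last es) = v" "t (hd es) = w"
      using vw unfolding sigma_mono_nonempty[OF False] by blast
    then have "last es \<in> E" "hd es \<in> E"
      using last_in_set hd_in_set unfolding is_path_def by blast+
    then show ?thesis using assms es by (auto simp: quiver_def)
  qed (use vw in \<open>auto simp: sigma_mono_Nil\<close>)
  then show ?thesis by auto
qed

lemma sigma_mono_append_iff:
  assumes "quiver V E s t"
  shows "(v, w) \<in> sigma_mono V E s t l (m @ n) \<longleftrightarrow>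
    (\<exists>u. (v, u) \<in> sigma_mono V E s t l n \<and> (u, w) \<in> sigma_mono V E s t l m)"
proof (cases "m = [] \<or> n = []")
  case True
  then show ?thesis
    using sigma_mono_subset[OF assms, of l m] sigma_mono_subset[OF assms, of l n]
    by (auto simp: sigma_mono_Nil)
next
  case False
  then have ne: "m \<noteq> []" "n \<noteq> []" "m @ n \<noteq> []" by auto
  show ?thesis
  proof
    assume "(v, w) \<in> sigma_mono V E s t l (m @ n)"
    then obtain es where es: "is_path E s t es" "map l es = m @ n" "s (last es) = v" "t (hd es) = w"
      unfolding sigma_mono_nonempty[OF ne(3)] by blast
    then obtain us ds where split: "es = us @ ds" "map l us = m" "map l ds = n"
      by (auto simp: map_eq_append_conv)
    then have ne': "us \<noteq> []" "ds \<noteq> []" using ne by auto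
    then have "is_path E s t us" "is_path E s t ds" "s (last us) = t (hd ds)"
      using es(1) is_path_append_iff[OF ne'] unfolding split(1) by blast+
    then have "(v, s (last us)) \<in> sigma_mono V E s t l n" "(s (last us), w) \<in> sigma_mono V E s t l m"
      unfolding sigma_mono_nonempty[OF ne(1)] sigma_mono_nonempty[OF ne(2)]
      using es split ne' by auto
    then show "\<exists>u. (v, u) \<in> sigma_mono V E s t l n \<and> (u, w) \<in> sigma_mono V E s t l m" by blast
  next
    assume "\<exists>u. (v, u) \<in> sigma_mono V E s t l n \<and> (u, w) \<in> sigma_mono V E s t l m"
    then obtain u ds es where
      ds: "is_path E s t ds" "map l ds = n" "s (last ds) = v" "t (hd ds) = u" and
      es: "is_path E s t es" "map l es = m" "s (last es) = u" "t (hd es) = w"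
      unfolding sigma_mono_nonempty[OF ne(1)] sigma_mono_nonempty[OF ne(2)] by blast
    then have ne': "es \<noteq> []" "ds \<noteq> []" by (auto simp: is_path_def)
    then have "is_path E s t (es @ ds)"
      using ds es by (intro is_path_append_iff[OF ne', THEN iffD2] conjI) simp_all
    then show "(v, w) \<in> sigma_mono V E s t l (m @ n)"
      unfolding sigma_mono_nonempty[OF ne(3)] using ds es ne' by auto
  qed
qed

section \<open>Realizations\<close>

locale consistent_representation = linear_category C
  for C :: "('o, 'm, 'r::comm_ring_1, 'z) lcat_scheme" +
  fixes V :: "'v set" and E :: "'e set" and s t :: "'e \<Rightarrow> 'v" and l :: "'e \<Rightarrow> 'x"
    and Vo :: "'v \<Rightarrow> 'o" and phi :: "'e \<Rightarrow> 'm"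
  assumes quiver: "quiver V E s t"
    and representation: "representation C V E s t Vo phi"
    and consistent: "consistent C E s t l Vo phi"
begin

abbreviation "pmor \<equiv> path_mor C s t Vo phi"
abbreviation "\<sigma> \<equiv> sigma_mono V E s t l"
abbreviation "\<Phi> \<equiv> mono_real C E s t l Vo phi"

lemma path_mor_hom: "is_path E s t es \<Longrightarrow> pmor es \<in> lc_hom C (Vo (s (last es))) (Vo (t (hd es)))"
proof (induction es rule: induct_list012)
  case (2 e)
  then show ?case using representation by (simp add: representation_def)
next
  case (3 e e' es)
  then have "pmor (e' # es) \<in> lc_hom C (Vo (s (last (e' # es)))) (Vo (s e))"
    and "phi e \<in> lc_hom C (Vo (s e)) (Vo (t e))"
    using representation by (auto simp: is_path_Cons_Cons representation_def)
  then show ?case by (simp add: lc_cmp_closed)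
qed (simp add: is_path_def)

lemma path_mor_append:
  assumes "is_path E s t (es @ ds)" "es \<noteq> []" "ds \<noteq> []"
  shows "pmor (es @ ds) = lc_cmp C (Vo (s (last ds))) (Vo (s (last es))) (Vo (t (hd es))) (pmor es) (pmor ds)"
  using assms
proof (induction es rule: induct_list012)
  case (2 e)
  then show ?case by (cases ds) auto
next
  case (3 e e' es)
  let ?u = "Vo (s (last ds))" and ?v = "Vo (s (last (e' # es)))" and ?w = "Vo (s e)"
  have "is_path E s t ((e' # es) @ ds)" "e \<in> E" "s e = t e'"
    using "3.prems"(1) by (simp_all add: is_path_Cons_Cons)
  moreover have "is_path E s t ((e' # es) @ ds) \<longleftrightarrow>
      is_path E s t (e' # es) \<and> is_path E s t ds \<and> s (last (e' # es)) = t (hd ds)"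
    by (rule is_path_append_iff) (simp_all add: "3.prems"(3))
  ultimately have paths: "is_path E s t (e' # es)" "is_path E s t ds" "s (last (e' # es)) = t (hd ds)"
    and e: "e \<in> E" "s e = t e'"
    by blast+
  have homs: "pmor ds \<in> lc_hom C ?u ?v" "pmor (e' # es) \<in> lc_hom C ?v ?w"
    "phi e \<in> lc_hom C ?w (Vo (t e))"
    using path_mor_hom[OF paths(2)] path_mor_hom[OF paths(1)] paths(3) e(2)[symmetric]
      representation e(1) unfolding representation_def by auto
  have "pmor ((e # e' # es) @ ds) = lc_cmp C ?u ?w (Vo (t e)) (phi e) (pmor ((e' # es) @ ds))"
    using "3.prems"(3) by simp
  also have "\<dots> = lc_cmp C ?u ?w (Vo (t e)) (phi e) (lc_cmp C ?u ?v ?w (pmor (e' # es)) (pmor ds))"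
    using "3.IH" "3.prems" paths by (simp add: is_path_Cons_Cons)
  also have "\<dots> = lc_cmp C ?u ?v (Vo (t e)) (pmor (e # e' # es)) (pmor ds)"
    using lc_cmp_assoc[OF homs] by simp
  finally show ?case by simp
qed simp

lemma mono_real_Nil: "\<Phi> v v [] = lc_idm C (Vo v)"
  by (simp add: mono_real_def)

lemma mono_real_path:
  assumes "is_path E s t es"
  shows "\<Phi> (s (last es)) (t (hd es)) (map l es) = pmor es"
proof -
  let ?P = "\<lambda>ds. is_path E s t ds \<and> map l ds = map l es \<and> s (last ds) = s (last es) \<and> t (hd ds) = t (hd es)"
  have "?P (SOME ds. ?P ds)" by (rule someI[of ?P es]) (simp add: assms)
  then have "pmor (SOME ds. ?P ds) = pmor es"
    using consistent[unfolded consistent_def, rule_format, of "SOME ds. ?P ds" es] assms by simp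
  moreover have "map l es \<noteq> []" using assms by (simp add: is_path_def)
  ultimately show ?thesis by (simp add: mono_real_def)
qed

lemma mono_real_hom: "(v, w) \<in> \<sigma> m \<Longrightarrow> \<Phi> v w m \<in> lc_hom C (Vo v) (Vo w)"
proof (cases "m = []")
  case False
  assume "(v, w) \<in> \<sigma> m"
  then obtain es where "is_path E s t es" "map l es = m" "s (last es) = v" "t (hd es) = w"
    using False unfolding sigma_mono_nonempty[OF False] by blast
  then show ?thesis using mono_real_path[of es] path_mor_hom[of es] by simp
qed (simp add: sigma_mono_Nil mono_real_Nil lc_idm_closed)

lemma mono_real_append:
  assumes "(v, u) \<in> \<sigma> n" "(u, w) \<in> \<sigma> m"
  shows "\<Phi> v w (m @ n) = lc_cmp C (Vo v) (Vo u) (Vo w) (\<Phi> u w m) (\<Phi> v u n)"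
proof -
  consider "m = []" | "n = []" | "m \<noteq> []" "n \<noteq> []" by blast
  then show ?thesis
  proof cases
    case 1
    then have "u = w" using assms(2) by (simp add: sigma_mono_Nil)
    then show ?thesis using 1 mono_real_hom[OF assms(1)] by (simp add: mono_real_Nil lc_cmp_idm_left)
  next
    case 2
    then have "v = u" using assms(1) by (simp add: sigma_mono_Nil)
    then show ?thesis using 2 mono_real_hom[OF assms(2)] by (simp add: mono_real_Nil lc_cmp_idm_right)
  next
    case 3
    then obtain ds es where
      ds: "is_path E s t ds" "map l ds = n" "s (last ds) = v" "t (hd ds) = u" and
      es: "is_path E s t es" "map l es = m" "s (last es) = u" "t (hd es) = w"
      using assms unfolding sigma_mono_nonempty[OF 3(1)] sigma_mono_nonempty[OF 3(2)] by blast
    then have ne: "es \<noteq> []" "ds \<noteq> []" by (auto simp: is_path_def)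
    then have path: "is_path E s t (es @ ds)"
      using ds es by (intro is_path_append_iff[OF ne, THEN iffD2] conjI) simp_all
    have "\<Phi> v w (m @ n) = pmor (es @ ds)"
      using mono_real_path[OF path] ds es ne by simp
    also have "\<dots> = lc_cmp C (Vo v) (Vo u) (Vo w) (pmor es) (pmor ds)"
      using path_mor_append[OF path ne] ds es by simp
    also have "\<dots> = lc_cmp C (Vo v) (Vo u) (Vo w) (\<Phi> u w m) (\<Phi> v u n)"
      using mono_real_path[of es] mono_real_path[of ds] ds es by simp
    finally show ?thesis .
  qed
qed

definition mono_real_ext :: "'v \<Rightarrow> 'v \<Rightarrow> 'x list \<Rightarrow> 'm" where
  "mono_real_ext v w m = (if (v, w) \<in> \<sigma> m then \<Phi> v w m else lc_zero C (Vo v) (Vo w))"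

lemma mono_real_ext_hom: "mono_real_ext v w m \<in> lc_hom C (Vo v) (Vo w)"
  unfolding mono_real_ext_def using mono_real_hom lc_zero_closed by simp

lemma realization_eq_linear_ext:
  assumes "(v, w) \<in> sigma V E s t l g"
  shows "realization C E s t l Vo phi v w g = linear_ext (Vo v) (Vo w) (mono_real_ext v w) g"
proof -
  have on_keys: "(v, w) \<in> \<sigma> m" if "m \<in> Poly_Mapping.keys g" for m
    using assms that by (simp add: sigma_def)
  have "realization C E s t l Vo phi v w g = linear_ext (Vo v) (Vo w) (\<Phi> v w) g"
    unfolding realization_def linear_ext_def
    by (rule hom_sum_eq_finprod) (simp_all add: Pi_def lc_smult_closed mono_real_hom on_keys)
  also have "\<dots> = linear_ext (Vo v) (Vo w) (mono_real_ext v w) g"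
    by (rule linear_ext_cong, rule mono_real_ext_hom) (simp add: mono_real_ext_def on_keys)
  finally show ?thesis .
qed

lemma linear_ext_sandwich_eq_zero:
  assumes uniform: "uniformly_compatible V E s t l g"
    and vanish: "realizations_vanish C V E s t l Vo phi g"
  shows "linear_ext (Vo v) (Vo w) (\<lambda>m. mono_real_ext v w (a @ m @ b)) g = lc_zero C (Vo v) (Vo w)"
proof (cases "\<exists>m0\<in>Poly_Mapping.keys g. (v, w) \<in> \<sigma> (a @ m0 @ b)")
  case False
  then show ?thesis by (intro linear_ext_eq_zero mono_real_ext_hom) (auto simp: mono_real_ext_def)
next
  case True
  then obtain m0 u1 u2 where m0: "m0 \<in> Poly_Mapping.keys g"
    and u: "(v, u1) \<in> \<sigma> b" "(u1, u2) \<in> \<sigma> m0" "(u2, w) \<in> \<sigma> a"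
    by (auto simp: sigma_mono_append_iff[OF quiver])
  have middle: "(u1, u2) \<in> \<sigma> m" if "m \<in> Poly_Mapping.keys g" for m
    using uniform m0 that u(2) unfolding uniformly_compatible_def by metis
  let ?a = "\<Phi> u2 w a" and ?b = "\<Phi> v u1 b"
  have homs: "?a \<in> lc_hom C (Vo u2) (Vo w)" "?b \<in> lc_hom C (Vo v) (Vo u1)"
    using u by (simp_all add: mono_real_hom)
  have "(u1, u2) \<in> sigma V E s t l g"
    using middle sigma_mono_subset[OF quiver] u(2) by (auto simp: sigma_def)
  then have realization_zero:
    "linear_ext (Vo u1) (Vo u2) (mono_real_ext u1 u2) g = lc_zero C (Vo u1) (Vo u2)"
    using vanish by (auto simp: realizations_vanish_def realization_eq_linear_ext)
  have sandwich: "mono_real_ext v w (a @ m @ b) =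
      lc_cmp C (Vo v) (Vo u2) (Vo w) ?a (lc_cmp C (Vo v) (Vo u1) (Vo u2) (mono_real_ext u1 u2 m) ?b)"
    if "m \<in> Poly_Mapping.keys g" for m
  proof -
    have mb: "(v, u2) \<in> \<sigma> (m @ b)"
      using u(1) middle[OF that] sigma_mono_append_iff[OF quiver] by blast
    then have "(v, w) \<in> \<sigma> (a @ m @ b)"
      using u(3) sigma_mono_append_iff[OF quiver] by blast
    moreover have "\<Phi> v w (a @ m @ b) = lc_cmp C (Vo v) (Vo u2) (Vo w) ?a (\<Phi> v u2 (m @ b))"
      by (rule mono_real_append[OF mb u(3)])
    moreover have "\<Phi> v u2 (m @ b) = lc_cmp C (Vo v) (Vo u1) (Vo u2) (\<Phi> u1 u2 m) ?b"
      by (rule mono_real_append[OF u(1) middle[OF that]])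
    ultimately show ?thesis by (simp add: mono_real_ext_def middle[OF that])
  qed
  have "linear_ext (Vo v) (Vo w) (\<lambda>m. mono_real_ext v w (a @ m @ b)) g =
      linear_ext (Vo v) (Vo w)
        (\<lambda>m. lc_cmp C (Vo v) (Vo u2) (Vo w) ?a (lc_cmp C (Vo v) (Vo u1) (Vo u2) (mono_real_ext u1 u2 m) ?b)) g"
    by (rule linear_ext_cong) (simp_all add: sandwich homs lc_cmp_closed mono_real_ext_hom)
  also have "\<dots> = lc_cmp C (Vo v) (Vo u2) (Vo w) ?a
      (lc_cmp C (Vo v) (Vo u1) (Vo u2) (linear_ext (Vo u1) (Vo u2) (mono_real_ext u1 u2) g) ?b)"
    by (simp add: linear_ext_cmp_left linear_ext_cmp_right homs lc_cmp_closed mono_real_ext_hom)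
  also have "\<dots> = lc_zero C (Vo v) (Vo w)"
    by (simp add: realization_zero homs lc_cmp_zero_left lc_cmp_zero_right)
  finally show ?thesis .
qed

lemma realizations_vanish_ideal:
  assumes "f \<in> nc_ideal F"
    and "\<And>g. g \<in> F \<Longrightarrow> uniformly_compatible V E s t l g"
    and "\<And>g. g \<in> F \<Longrightarrow> realizations_vanish C V E s t l Vo phi g"
  shows "realizations_vanish C V E s t l Vo phi f"
  unfolding realizations_vanish_def
proof clarify
  fix v w assume "(v, w) \<in> sigma V E s t l f"
  then have "realization C E s t l Vo phi v w f =
      linear_ext (Vo v) (Vo w) (\<lambda>m. mono_real_ext v w ([] @ m @ [])) f"
    by (simp add: realization_eq_linear_ext)
  also have "\<dots> = lc_zero C (Vo v) (Vo w)"
    by (rule linear_ext_ideal_eq_zero[OF assms(1) mono_real_ext_hom linear_ext_sandwich_eq_zero])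
       (simp_all add: assms(2,3))
  finally show "realization C E s t l Vo phi v w f = lc_zero C (Vo v) (Vo w)" .
qed

end

theorem theorem5p14:
  fixes F :: "('x, 'r::comm_ring_1) ncpoly set"
    and f :: "('x, 'r) ncpoly"
    and V :: "'v set" and E :: "'e set" and s t :: "'e \<Rightarrow> 'v" and l :: "'e \<Rightarrow> 'x"
  assumes "f \<in> nc_ideal F"
    and "quiver V E s t"
    and "compatible V E s t l f"
    and "\<forall>g\<in>F. uniformly_compatible V E s t l g"
  shows "\<forall>(C :: ('o, 'm, 'r) lcat) (Vo :: 'v \<Rightarrow> 'o) (phi :: 'e \<Rightarrow> 'm).
           R_linear_category C \<longrightarrow> representation C V E s t Vo phi \<longrightarrow>
           consistent C E s t l Vo phi \<longrightarrow>
           (\<forall>g\<in>F. realizations_vanish C V E s t l Vo phi g) \<longrightarrow>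
           realizations_vanish C V E s t l Vo phi f"
proof (intro allI impI)
  fix C :: "('o, 'm, 'r) lcat" and Vo :: "'v \<Rightarrow> 'o" and phi :: "'e \<Rightarrow> 'm"
  assume "R_linear_category C" "representation C V E s t Vo phi" "consistent C E s t l Vo phi"
    and vanish: "\<forall>g\<in>F. realizations_vanish C V E s t l Vo phi g"
  then interpret consistent_representation C V E s t l Vo phi
    using assms(2) by unfold_locales
  show "realizations_vanish C V E s t l Vo phi f"
    using realizations_vanish_ideal[OF assms(1)] assms(4) vanish by blast
qed

end
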